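(* Consider the semi-discrete finite volume scheme with Lax–Friedrichs flux for the multicomponent compressible Euler system described in the context. Assume $\rho_{i,K}(0)>0$ for all $K\in\mathcal{T}_h$, $i=1,\dots,\mathrm{n}$, that $\mathbf{u}_h=\mathbf{m}_h/\rho_h\in L^2(0,T;L^\infty(\Omega))$, and additionally that the initial specific entropy satisfies $s_K(0)\ge Z_*$ for all $K\in\mathcal{T}_h$, for some $Z_*\in\mathbb{R}$. Then \[ \mathbb{T}_K(t)>0\quad\text{and}\quad p_K(t)>0\qquad\text{for all }K\in\mathcal{T}_h,\ t\in[0,T]. \]
   Context: Domain: $\Omega=([0,1]|_{\{0,1\}})^N$, $N\in\{1,2,3\}$ (flat torus, periodic). Multicomponent Euler system for $\mathrm{n}$ species: unknowns partial densities $\rho_i$, momentum $\mathbf{m}=\rho\mathbf{u}$, total energy $\mathcal{E}$, with $\rho=\sum_{i}\rho_i$: $\partial_t\rho_i+\nabla\cdot(\rho_i\mathbf{u})=0$, $\partial_t\mathbf{m}+\nabla\cdot(\rho\mathbf{u}\otimes\mathbf{u}+p\mathbb{I})=0$, $\partial_t\mathcal{E}+\nabla\cdot((\mathcal{E}+p)\mathbf{u})=0$. Write $\mathbf{U}=(\rho_1,\dots,\rho_{\mathrm{n}},\mathbf{m},\mathcal{E})$ and $\mathbf{f}(\mathbf{U})$ the corresponding flux. Closure: $p=\sum_i\rho_i r_i\mathbb{T}$ with constants $r_i>0$, $\mathcal{E}=\sum_i\rho_i(e_{0i}+c_{vi}\mathbb{T})+\frac12\rho|\mathbf{u}|^2$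 with constants $e_{0i}$, $c_{vi}>0$, $c_{pi}=c_{vi}+r_i$. Mathematical entropy $\eta=-\rho s$, with specific entropy $s=\frac1\rho\sum_i\rho_i(c_{vi}\ln\mathbb{T}-r_i\ln\rho_i)$; entropy flux $-\rho s\mathbf{u}$. Scheme: uniform Cartesian mesh $\mathcal{T}_h$ with mesh size $h$, cells $K$ ($|K|=h^N$), interfaces $S_{KL}$ ($|S_{KL}|=h^{N-1}$), unit normals $\mathbf{n}_{KL}$ from $K$ to $L$, neighbours $\mathcal{N}(K)$. Piecewise constant $\mathbf{U}_h(t)$ with values $\mathbf{U}_K(t)$, initial values given by cell averages, and $|K|\frac{d}{dt}\mathbf{U}_K+\sum_{L\in\mathcal{N}(K)}|S_{KL}|\mathbf{F}_{KL}=0$, $\mathbf{F}_{KL}=\frac{\mathbf{f}(\mathbf{U}_K)+\mathbf{f}(\mathbf{U}_L)}{2}\cdot\mathbf{n}_{KL}-\frac{\lambda_{KL}}{2}(\mathbf{U}_L-\mathbf{U}_K)$, $\lambda_{KL}=\max(|\mathbf{u}_K|+c_{\rm mix}(\mathbf{U}_K),|\mathbf{u}_L|+c_{\rm mix}(\mathbf{U}_L))$, $c_{\rm mix}^2=\gamma_{\rm mix}p/\rho$, $\gamma_{\rm mix}=\sum_i\rho_ic_{pi}/\sum_i\rho_ic_{vi}$. Discrete thermodynamic quantities: $\mathbb{T}_K=\dfrac{\mathcal{E}_K-\big(\frac12|\mathbf{m}_K|^2/\rho_K+\sum_i\rho_{i,K}e_{0i}\big)}{\sum_i\rho_{i,K}c_{vi}}$,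 $s_K=\frac{1}{\rho_K}\sum_i\rho_{i,K}(c_{vi}\ln\mathbb{T}_K-r_i\ln\rho_{i,K})$, $p_K=\sum_i\rho_{i,K}r_i\mathbb{T}_K$. *)

theory Defs
  imports "HOL-Analysis.Analysis"
begin

text \<open>Components of the conservative state vector
  U = (rho_1,...,rho_n, m_1,...,m_N, E).\<close>
datatype comp = Rho nat | Mom nat | En

definition comps :: "nat \<Rightarrow> nat \<Rightarrow> comp set" where
  "comps ns N = {Rho i | i. i < ns} \<union> {Mom d | d. d < N} \<union> {En}"

text \<open>Cells of the uniform periodic Cartesian mesh with M cells per direction
  (mesh size h = 1/M) on the N-dimensional flat torus; a cell is a multi-index.\<close>
definition cells :: "nat \<Rightarrow> nat \<Rightarrow> (nat \<Rightarrow> nat) set" where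
  "cells N M = {K. (\<forall>d<N. K d < M) \<and> (\<forall>d. N \<le> d \<longrightarrow> K d = 0)}"

definition mesh_h :: "nat \<Rightarrow> real" where
  "mesh_h M = 1 / real M"

definition nbr :: "nat \<Rightarrow> (nat \<Rightarrow> nat) \<Rightarrow> nat \<Rightarrow> bool \<Rightarrow> (nat \<Rightarrow> nat)" where
  "nbr M K d \<sigma> = K(d := (if \<sigma> then (K d + 1) mod M else (K d + M - 1) mod M))"

definition side_sign :: "bool \<Rightarrow> real" where
  "side_sign \<sigma> = (if \<sigma> then 1 else -1)"

definition dens :: "nat \<Rightarrow> (comp \<Rightarrow> real) \<Rightarrow> real" where
  "dens ns U = (\<Sum>i<ns. U (Rho i))"

definition vel :: "nat \<Rightarrow> (comp \<Rightarrow> real) \<Rightarrow> nat \<Rightarrow> real" where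
  "vel ns U d = U (Mom d) / dens ns U"

definition vnorm :: "nat \<Rightarrow> nat \<Rightarrow> (comp \<Rightarrow> real) \<Rightarrow> real" where
  "vnorm ns N U = sqrt (\<Sum>d<N. (vel ns U d)\<^sup>2)"

definition temp :: "nat \<Rightarrow> (nat \<Rightarrow> real) \<Rightarrow> (nat \<Rightarrow> real) \<Rightarrow> nat \<Rightarrow> (comp \<Rightarrow> real) \<Rightarrow> real" where
  "temp ns e0 cv N U =
     (U En - ((1/2) * (\<Sum>d<N. (U (Mom d))\<^sup>2) / dens ns U + (\<Sum>i<ns. U (Rho i) * e0 i)))
     / (\<Sum>i<ns. U (Rho i) * cv i)"

definition pres :: "nat \<Rightarrow> (nat \<Rightarrow> real) \<Rightarrow> (nat \<Rightarrow> real) \<Rightarrow> (nat \<Rightarrow> real) \<Rightarrow> nat \<Rightarrow> (comp \<Rightarrow> real) \<Rightarrow> real" where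
  "pres ns r e0 cv N U = (\<Sum>i<ns. U (Rho i) * r i) * temp ns e0 cv N U"

definition spec_entropy :: "nat \<Rightarrow> (nat \<Rightarrow> real) \<Rightarrow> (nat \<Rightarrow> real) \<Rightarrow> (nat \<Rightarrow> real) \<Rightarrow> nat \<Rightarrow> (comp \<Rightarrow> real) \<Rightarrow> real" where
  "spec_entropy ns r e0 cv N U =
     (1 / dens ns U) * (\<Sum>i<ns. U (Rho i) * (cv i * ln (temp ns e0 cv N U) - r i * ln (U (Rho i))))"

definition gamma_mix :: "nat \<Rightarrow> (nat \<Rightarrow> real) \<Rightarrow> (nat \<Rightarrow> real) \<Rightarrow> (comp \<Rightarrow> real) \<Rightarrow> real" where
  "gamma_mix ns r cv U = (\<Sum>i<ns. U (Rho i) * (cv i + r i)) / (\<Sum>i<ns. U (Rho i) * cv i)"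

definition c_mix :: "nat \<Rightarrow> (nat \<Rightarrow> real) \<Rightarrow> (nat \<Rightarrow> real) \<Rightarrow> (nat \<Rightarrow> real) \<Rightarrow> nat \<Rightarrow> (comp \<Rightarrow> real) \<Rightarrow> real" where
  "c_mix ns r e0 cv N U = sqrt (gamma_mix ns r cv U * pres ns r e0 cv N U / dens ns U)"

definition phys_flux :: "nat \<Rightarrow> (nat \<Rightarrow> real) \<Rightarrow> (nat \<Rightarrow> real) \<Rightarrow> (nat \<Rightarrow> real) \<Rightarrow> nat \<Rightarrow> nat \<Rightarrow> (comp \<Rightarrow> real) \<Rightarrow> comp \<Rightarrow> real" where
  "phys_flux ns r e0 cv N d U c =
     (case c of
        Rho i \<Rightarrow> U (Rho i) * vel ns U d
      | Mom j \<Rightarrow> U (Mom j) * vel ns U d + (if j = d then pres ns r e0 cv N U else 0)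
      | En \<Rightarrow> (U En + pres ns r e0 cv N U) * vel ns U d)"

text \<open>Lax--Friedrichs numerical flux F_KL with normal n_KL = side_sign sigma * e_d.\<close>
definition lf_flux :: "nat \<Rightarrow> (nat \<Rightarrow> real) \<Rightarrow> (nat \<Rightarrow> real) \<Rightarrow> (nat \<Rightarrow> real) \<Rightarrow> nat \<Rightarrow> nat \<Rightarrow> bool
     \<Rightarrow> (comp \<Rightarrow> real) \<Rightarrow> (comp \<Rightarrow> real) \<Rightarrow> comp \<Rightarrow> real" where
  "lf_flux ns r e0 cv N d \<sigma> UK UL c =
     (let lam = max (vnorm ns N UK + c_mix ns r e0 cv N UK) (vnorm ns N UL + c_mix ns r e0 cv N UL)
      in (phys_flux ns r e0 cv N d UK c + phys_flux ns r e0 cv N d UL c) / 2 * side_sign \<sigma>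
         - lam / 2 * (UL c - UK c))"

text \<open>Right-hand side of the semi-discrete scheme:
  dU_K/dt = -(1/|K|) sum_{L in N(K)} |S_KL| F_KL, with |K| = h^N, |S_KL| = h^(N-1).\<close>
definition fv_rhs :: "nat \<Rightarrow> (nat \<Rightarrow> real) \<Rightarrow> (nat \<Rightarrow> real) \<Rightarrow> (nat \<Rightarrow> real) \<Rightarrow> nat \<Rightarrow> nat
     \<Rightarrow> ((nat \<Rightarrow> nat) \<Rightarrow> comp \<Rightarrow> real) \<Rightarrow> (nat \<Rightarrow> nat) \<Rightarrow> comp \<Rightarrow> real" where
  "fv_rhs ns r e0 cv N M U K c =
     - (1 / mesh_h M ^ N) *
       (\<Sum>d<N. \<Sum>\<sigma>\<in>{True, False}.
          mesh_h M ^ (N - 1) * lf_flux ns r e0 cv N d \<sigma> (U K) (U (nbr M K d \<sigma>)) c)"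

end

(* Positivity is propagated by first-touch (barrier) arguments, glued together by a continuous
   induction on the first time at which some density or some internal energy
   rho e = E - |m|^2 / (2 rho) - sum_i rho_i e0_i stops being positive.

   At a cell where rho_i is minimal, the numerical diffusion of the Lax-Friedrichs flux bounds the
   outflow of species i by N M |u|_inf rho_i, so rho_i exp(int_0^t N M (1 + |u|_inf^2) + t) cannot
   fall to its initial lower bound. The L2(L-infinity) bound on the velocity keeps this weight
   bounded uniformly in t, so the densities stay away from zero up to the first failure time.

   The time derivative of rho e at K is the differential of rho e at U_K applied to the scheme.
   Seen from U_K, a neighbouring state has its own internal energy plus the kinetic energy of the
   relative velocity, and the Lax-Friedrichs speed dominates the pressure work, so
   (rho e_K)' >= - M/2 Lambda_K rho e_K and the same barrier argument applies with a weight exp(beta t).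
   Temperature and pressure are positive multiples of rho e. *)

theory Submission
  imports Defs
begin

lemma nbr_in_cells:
  assumes "K \<in> cells N M" "d < N" "1 \<le> M"
  shows "nbr M K d \<sigma> \<in> cells N M"
  using assms unfolding cells_def nbr_def by auto

lemma finite_cells: "finite (cells N M)"
proof -
  let ?extend = "\<lambda>g d. if d < N then g d else (0::nat)"
  have "cells N M \<subseteq> ?extend ` ({..<N} \<rightarrow>\<^sub>E {..<M})"
  proof
    fix K assume K: "K \<in> cells N M"
    then have "K = ?extend (restrict K {..<N})" unfolding cells_def by (auto simp: fun_eq_iff)
    moreover have "restrict K {..<N} \<in> {..<N} \<rightarrow>\<^sub>E {..<M}" using K unfolding cells_def by auto
    ultimately show "K \<in> ?extend ` ({..<N} \<rightarrow>\<^sub>E {..<M})" by blast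
  qed
  moreover have "finite (?extend ` ({..<N} \<rightarrow>\<^sub>E {..<M}))" by (intro finite_imageI finite_PiE) auto
  ultimately show ?thesis by (rule finite_subset)
qed

lemma cells_nonempty: "1 \<le> M \<Longrightarrow> cells N M \<noteq> {}"
  unfolding cells_def by (rule ccontr) (auto dest!: spec[of _ "\<lambda>_. 0"])

lemma Rho_in_comps: "i < ns \<Longrightarrow> Rho i \<in> comps ns N"
  by (simp add: comps_def)

lemma fv_rhs_eq_face_sum:
  assumes "1 \<le> N" "1 \<le> M"
  shows "fv_rhs ns r e0 cv N M V K c = - real M * (\<Sum>d<N.
     lf_flux ns r e0 cv N d True (V K) (V (nbr M K d True)) c +
     lf_flux ns r e0 cv N d False (V K) (V (nbr M K d False)) c)"
proof -
  obtain k where k: "N = Suc k" using assms by (cases N) auto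
  have scale: "1 / mesh_h M ^ N * mesh_h M ^ (N - 1) = real M"
    using assms unfolding k mesh_h_def by (simp add: power_divide)
  have "(\<Sum>d<N. \<Sum>\<sigma>\<in>{True, False}. mesh_h M ^ (N - 1) * lf_flux ns r e0 cv N d \<sigma> (V K) (V (nbr M K d \<sigma>)) c)
     = mesh_h M ^ (N - 1) * (\<Sum>d<N. lf_flux ns r e0 cv N d True (V K) (V (nbr M K d True)) c +
     lf_flux ns r e0 cv N d False (V K) (V (nbr M K d False)) c)"
    by (simp add: sum_distrib_left distrib_left)
  then show ?thesis unfolding fv_rhs_def using scale by (simp add: mult.assoc[symmetric])
qed

lemma vel_abs_le_vnorm:
  assumes "d < N"
  shows "\<bar>vel ns U d\<bar> \<le> vnorm ns N U"
proof -
  have "(vel ns U d)\<^sup>2 \<le> (\<Sum>d<N. (vel ns U d)\<^sup>2)"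
    using assms by (intro member_le_sum) auto
  then have "sqrt ((vel ns U d)\<^sup>2) \<le> sqrt (\<Sum>d<N. (vel ns U d)\<^sup>2)"
    by (rule real_sqrt_le_mono)
  then show ?thesis unfolding vnorm_def by simp
qed

lemma finite_pos_lower_bound:
  fixes f :: "'a \<Rightarrow> real"
  assumes "finite I" "\<forall>k\<in>I. f k > 0"
  shows "\<exists>l>0. \<forall>k\<in>I. f k > l"
  using assms
proof (induction I rule: finite_induct)
  case empty then show ?case by (intro exI[of _ 1]) auto
next
  case (insert x F)
  then obtain l where "l > 0" "\<forall>k\<in>F. f k > l" by auto
  with insert.prems show ?case by (intro exI[of _ "min l (f x / 2)"]) auto
qed

lemma continuous_Max_image:
  fixes f :: "'k \<Rightarrow> real \<Rightarrow> real"
  assumes "finite S" "S \<noteq> {}" "\<forall>K\<in>S. continuous F (f K)"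
  shows "continuous F (\<lambda>t. Max ((\<lambda>K. f K t) ` S))"
  using assms
proof (induction S rule: finite_ne_induct)
  case (singleton x) then show ?case by simp
next
  case (insert x S)
  then have "(\<lambda>t. Max ((\<lambda>K. f K t) ` insert x S)) = (\<lambda>t. max (f x t) (Max ((\<lambda>K. f K t) ` S)))"
    by (auto simp: fun_eq_iff)
  with insert show ?case by (simp add: continuous_max)
qed

lemma continuous_on_ge_right_endpoint:
  fixes f :: "real \<Rightarrow> real"
  assumes "continuous_on {a..b} f" "a < b" "\<forall>t\<in>{a..<b}. l \<le> f t"
  shows "l \<le> f b"
proof -
  have "continuous_on (closure {a..<b}) f" "b \<in> closure {a..<b}" using assms by auto
  then show ?thesis by (rule continuous_ge_on_closure) (use assms in auto)
qed

lemma continuous_induction: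
  fixes P :: "real \<Rightarrow> bool"
  assumes closed: "closed {t \<in> {0..T}. \<not> P t}" and start: "P 0"
    and step: "\<And>t0. t0 \<in> {0<..T} \<Longrightarrow> \<forall>t\<in>{0..<t0}. P t \<Longrightarrow> P t0"
  shows "\<forall>t\<in>{0..T}. P t"
proof (rule ccontr)
  define F where "F = {t \<in> {0..T}. \<not> P t}"
  assume "\<not> (\<forall>t\<in>{0..T}. P t)"
  then have "F \<noteq> {}" unfolding F_def by auto
  moreover have "bdd_below F" unfolding F_def by (rule bdd_belowI[of _ 0]) auto
  moreover have "closed F" using closed unfolding F_def .
  ultimately have first: "Inf F \<in> F" by (rule closed_contains_Inf)
  have before: "P t" if "t \<in> {0..<Inf F}" for t
  proof (rule ccontr)
    assume "\<not> P t"
    with that first have "t \<in> F" unfolding F_def by auto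
    then have "Inf F \<le> t" using \<open>bdd_below F\<close> by (rule cInf_lower)
    with that show False by simp
  qed
  have "Inf F \<noteq> 0" using first start unfolding F_def by auto
  then have "Inf F \<in> {0<..T}" using first unfolding F_def by auto
  then have "P (Inf F)" by (rule step) (use before in blast)
  with first show False unfolding F_def by simp
qed

lemma barrier_lower_bound:
  fixes h :: "'k \<Rightarrow> real \<Rightarrow> real"
  assumes fin: "finite I" and cont: "\<forall>k\<in>I. continuous_on {0..t0} (h k)"
    and init: "\<forall>k\<in>I. h k 0 > l"
    and touch: "\<And>\<tau> k. \<tau> \<in> {0<..t0} \<Longrightarrow> k \<in> I \<Longrightarrow> h k \<tau> = l \<Longrightarrow> \<forall>j\<in>I. \<forall>s\<in>{0..\<tau>}. h j s \<ge> l
        \<Longrightarrow> \<exists>D>0. (h k has_real_derivative D) (at \<tau> within {0..t0})"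
  shows "\<forall>k\<in>I. \<forall>t\<in>{0..t0}. h k t > l"
proof -
  have "\<forall>t\<in>{0..t0}. \<forall>k\<in>I. h k t > l"
  proof (rule continuous_induction)
    have "{t \<in> {0..t0}. \<not> (\<forall>k\<in>I. h k t > l)} = (\<Union>k\<in>I. {0..t0} \<inter> h k -` {..l})" by (auto simp: not_less)
    also have "closed \<dots>" using fin cont by (intro closed_UN) (auto intro: continuous_closed_preimage)
    finally show "closed {t \<in> {0..t0}. \<not> (\<forall>k\<in>I. h k t > l)}" .
  next
    fix \<tau> assume \<tau>: "\<tau> \<in> {0<..t0}" and before: "\<forall>t\<in>{0..<\<tau>}. \<forall>k\<in>I. h k t > l"
    have ge: "h j s \<ge> l" if j: "j \<in> I" and s: "s \<in> {0..\<tau>}" for j s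
    proof (cases "s < \<tau>")
      case False
      have "continuous_on {0..\<tau>} (h j)" using cont j \<tau> by (auto intro: continuous_on_subset)
      with False s \<tau> before j show ?thesis
        using continuous_on_ge_right_endpoint[of 0 \<tau> "h j" l] by fastforce
    qed (use before j s in \<open>fastforce intro: less_imp_le\<close>)
    show "\<forall>k\<in>I. h k \<tau> > l"
    proof (rule ccontr)
      assume "\<not> (\<forall>k\<in>I. h k \<tau> > l)"
      then obtain k where "k \<in> I" "h k \<tau> \<le> l" by auto
      moreover have "h k \<tau> \<ge> l" using ge[OF \<open>k \<in> I\<close>, of \<tau>] \<tau> by simp
      ultimately have k: "k \<in> I" "h k \<tau> = l" by auto
      then obtain D where "D > 0" "(h k has_real_derivative D) (at \<tau> within {0..t0})"
        using touch[OF \<tau>] ge by blast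
      then obtain d where d: "d > 0" "\<forall>s>0. \<tau> - s \<in> {0..t0} \<longrightarrow> s < d \<longrightarrow> h k (\<tau> - s) < h k \<tau>"
        using has_real_derivative_pos_inc_left by blast
      define s where "s = min (d / 2) \<tau>"
      have "s > 0" "s < d" "\<tau> - s \<in> {0..<\<tau>}" unfolding s_def using d \<tau> by auto
      then have "h k (\<tau> - s) < l" "h k (\<tau> - s) > l" using d k before \<tau> by auto
      then show False by simp
    qed
  qed (use init in auto)
  then show ?thesis by blast
qed

lemma exp_weighted_has_derivative_pos:
  fixes f B :: "real \<Rightarrow> real"
  assumes "(f has_real_derivative f') (at \<tau> within S)" "(B has_real_derivative b) (at \<tau> within S)"
    and "f' + b * f \<tau> > 0"
  shows "\<exists>D>0. ((\<lambda>t. f t * exp (B t)) has_real_derivative D) (at \<tau> within S)"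
proof -
  have "((\<lambda>t. f t * exp (B t)) has_real_derivative (f' + b * f \<tau>) * exp (B \<tau>)) (at \<tau> within S)"
    by (auto intro!: derivative_eq_intros assms(1,2) simp: algebra_simps)
  then show ?thesis using assms(3) by (intro exI[of _ "(f' + b * f \<tau>) * exp (B \<tau>)"]) simp
qed

lemma pos_if_exp_weighted_ge:
  fixes x y l :: real
  assumes "0 < l" "l \<le> x * exp y"
  shows "0 < x"
  using assms by (smt (verit) exp_gt_zero mult_nonpos_nonneg)

lemma less_mult_exp_iff:
  fixes x y l :: real
  shows "l < x * exp y \<longleftrightarrow> l * exp (- y) < x"
  using exp_gt_zero[of y] by (simp add: exp_minus field_simps)

lemma lf_upwind_le:
  fixes a b x lam u :: real
  assumes "0 \<le> a" "a \<le> b" "\<bar>x\<bar> \<le> lam" "\<bar>x\<bar> \<le> u"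
  shows "b * x - lam * (b - a) \<le> u * a"
proof -
  have "b * x \<le> b * \<bar>x\<bar>" "\<bar>x\<bar> * (b - a) \<le> lam * (b - a)" "\<bar>x\<bar> * a \<le> u * a"
    using assms by (auto intro: mult_left_mono mult_right_mono)
  then show ?thesis by (simp add: algebra_simps)
qed

text \<open>p = R g / Cv is the pressure and al is at least the sound speed; the claim reduces to
  p |w| <= al g + al rho w^2 / 2, a quadratic in |w| whose discriminant condition
  p^2 <= 2 al^2 rho g holds since 2 (Cv + R) >= R.\<close>
lemma sound_speed_dominates_pressure_work:
  fixes R Cv g rho al Q w s :: real
  assumes R: "R > 0" and Cv: "Cv > 0" and rho: "rho > 0" and g: "g > 0"
    and al: "al \<ge> sqrt (((Cv + R) / Cv) * (R * (g / Cv)) / rho)"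
    and Q: "Q \<ge> w\<^sup>2" and s: "s = 1 \<or> s = -1"
  shows "s * (R * (g / Cv)) * w \<le> al * (g + rho * Q / 2)"
proof -
  define p where "p = R * (g / Cv)"
  define c2 where "c2 = ((Cv + R) / Cv) * p / rho"
  have p: "p > 0" unfolding p_def using R Cv g by simp
  have c2: "c2 > 0" unfolding c2_def using p Cv R rho by simp
  have al0: "al > 0" using al c2 unfolding c2_def p_def by (meson less_le_trans real_sqrt_gt_zero)
  have "(sqrt c2)\<^sup>2 \<le> al\<^sup>2" using al c2 unfolding c2_def p_def by (intro power_mono) auto
  then have "c2 \<le> al\<^sup>2" using c2 by simp
  then have "2 * c2 * rho * g \<le> 2 * al\<^sup>2 * rho * g" using rho g by simp
  moreover have "p\<^sup>2 \<le> 2 * c2 * rho * g"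
  proof -
    have "p\<^sup>2 = R * R * g\<^sup>2 / Cv\<^sup>2" "2 * c2 * rho * g = 2 * (Cv + R) * R * g\<^sup>2 / Cv\<^sup>2"
      unfolding c2_def p_def using rho Cv by (simp_all add: field_simps power2_eq_square)
    moreover have "R * R * g\<^sup>2 / Cv\<^sup>2 \<le> 2 * (Cv + R) * R * g\<^sup>2 / Cv\<^sup>2"
      using R Cv by (intro divide_right_mono mult_right_mono) (auto simp: mult_mono)
    ultimately show ?thesis by simp
  qed
  ultimately have disc: "p\<^sup>2 \<le> 2 * al\<^sup>2 * rho * g" by linarith
  have "0 \<le> (al * rho * \<bar>w\<bar> - p)\<^sup>2" by simp
  then have "0 \<le> 2 * al * rho * (al * g + al * rho * w\<^sup>2 / 2 - p * \<bar>w\<bar>)"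
    using disc by (simp add: power2_eq_square algebra_simps)
  then have "0 \<le> al * g + al * rho * w\<^sup>2 / 2 - p * \<bar>w\<bar>"
    using al0 rho mult_pos_pos[OF al0 rho] by (simp add: zero_le_mult_iff)
  moreover have "al * rho * w\<^sup>2 / 2 \<le> al * rho * Q / 2" using Q al0 rho by simp
  moreover have "s * p * w \<le> p * \<bar>w\<bar>" using s p by (auto simp: abs_if)
  ultimately show ?thesis unfolding p_def[symmetric] by (simp add: algebra_simps)
qed

locale mixture =
  fixes ns :: nat and r e0 cv :: "nat \<Rightarrow> real" and N :: nat
  assumes species: "1 \<le> ns" and r_pos: "\<forall>i<ns. r i > 0" and cv_pos: "\<forall>i<ns. cv i > 0"
begin

lemma species_sum_pos:
  assumes "\<forall>i<ns. V (Rho i) > 0" "\<forall>i<ns. w i > (0::real)"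
  shows "(\<Sum>i<ns. V (Rho i) * w i) > 0"
proof -
  have "{..<ns} \<noteq> {}" using species by (auto simp: lessThan_empty_iff)
  then show ?thesis using assms by (intro sum_pos) auto
qed

lemma dens_pos: "\<forall>i<ns. V (Rho i) > 0 \<Longrightarrow> dens ns V > 0"
  using species_sum_pos[of V "\<lambda>_. 1"] unfolding dens_def by simp

definition internal_energy :: "(comp \<Rightarrow> real) \<Rightarrow> real" where
  "internal_energy V = V En - ((1/2) * (\<Sum>d<N. (V (Mom d))\<^sup>2) / dens ns V + (\<Sum>i<ns. V (Rho i) * e0 i))"

definition internal_energy_diff :: "(comp \<Rightarrow> real) \<Rightarrow> (comp \<Rightarrow> real) \<Rightarrow> real" where
  "internal_energy_diff V W = W En - (\<Sum>d<N. vel ns V d * W (Mom d))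
     + (\<Sum>d<N. (vel ns V d)\<^sup>2) / 2 * dens ns W - (\<Sum>i<ns. e0 i * W (Rho i))"

lemma temp_eq: "temp ns e0 cv N V = internal_energy V / (\<Sum>i<ns. V (Rho i) * cv i)"
  unfolding temp_def internal_energy_def by simp

lemma temp_pos_iff:
  assumes "\<forall>i<ns. V (Rho i) > 0"
  shows "temp ns e0 cv N V > 0 \<longleftrightarrow> internal_energy V > 0"
  using species_sum_pos[OF assms cv_pos] unfolding temp_eq by (simp add: zero_less_divide_iff)

lemma pres_pos:
  assumes "\<forall>i<ns. V (Rho i) > 0" "internal_energy V > 0"
  shows "pres ns r e0 cv N V > 0"
  using species_sum_pos[OF assms(1) r_pos] temp_pos_iff[OF assms(1)] assms(2)
  unfolding pres_def by simp

lemma dens_mult_internal_energy: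
  assumes "dens ns V \<noteq> 0"
  shows "dens ns V * internal_energy V
    = dens ns V * (V En - (\<Sum>i<ns. V (Rho i) * e0 i)) - (1/2) * (\<Sum>d<N. (V (Mom d))\<^sup>2)"
  using assms unfolding internal_energy_def by (simp add: field_simps)

lemma c_mix_nonneg:
  assumes "\<forall>i<ns. V (Rho i) > 0" "internal_energy V > 0"
  shows "c_mix ns r e0 cv N V \<ge> 0"
proof -
  have "(\<Sum>i<ns. V (Rho i) * (cv i + r i)) > 0"
    using species_sum_pos[OF assms(1)] cv_pos r_pos by (simp add: add_pos_pos)
  then have "gamma_mix ns r cv V > 0"
    unfolding gamma_mix_def using species_sum_pos[OF assms(1) cv_pos] by simp
  with pres_pos[OF assms] dens_pos[OF assms(1)] show ?thesis unfolding c_mix_def by simp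
qed

lemma internal_energy_diff_self:
  assumes "dens ns V \<noteq> 0"
  shows "internal_energy_diff V V = internal_energy V"
proof -
  have "(\<Sum>d<N. vel ns V d * V (Mom d)) = (\<Sum>d<N. (V (Mom d))\<^sup>2) / dens ns V"
    unfolding vel_def by (simp add: sum_divide_distrib power2_eq_square)
  moreover have "(\<Sum>d<N. (vel ns V d)\<^sup>2) = (\<Sum>d<N. (V (Mom d))\<^sup>2) / (dens ns V)\<^sup>2"
    unfolding vel_def by (simp add: sum_divide_distrib power_divide)
  then have "(\<Sum>d<N. (vel ns V d)\<^sup>2) / 2 * dens ns V = (1/2) * (\<Sum>d<N. (V (Mom d))\<^sup>2) / dens ns V"
    using assms by (simp add: power2_eq_square)
  ultimately show ?thesis unfolding internal_energy_diff_def internal_energy_def by (simp add: mult.commute)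
qed

lemma internal_energy_diff_eq_relative:
  assumes "dens ns W \<noteq> 0"
  shows "internal_energy_diff V W
    = internal_energy W + dens ns W / 2 * (\<Sum>j<N. (vel ns W j - vel ns V j)\<^sup>2)"
proof -
  have split: "(\<Sum>j<N. (vel ns W j - vel ns V j)\<^sup>2)
    = (\<Sum>j<N. (vel ns W j)\<^sup>2) - 2 * (\<Sum>j<N. vel ns V j * vel ns W j) + (\<Sum>j<N. (vel ns V j)\<^sup>2)"
    by (simp add: power2_diff sum.distrib sum_subtractf sum_distrib_left algebra_simps)
  have "dens ns W * (\<Sum>j<N. (vel ns W j)\<^sup>2) = (\<Sum>j<N. (W (Mom j))\<^sup>2) / dens ns W"
    "dens ns W * (\<Sum>j<N. vel ns V j * vel ns W j) = (\<Sum>j<N. vel ns V j * W (Mom j))"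
    unfolding vel_def using assms
    by (simp_all add: sum_distrib_left sum_divide_distrib power2_eq_square field_simps)
  then show ?thesis unfolding internal_energy_diff_def internal_energy_def split
    by (simp add: algebra_simps add_divide_distrib diff_divide_distrib)
qed

lemma internal_energy_diff_phys_flux:
  assumes "d < N"
  shows "internal_energy_diff V (phys_flux ns r e0 cv N d W)
    = vel ns W d * internal_energy_diff V W + pres ns r e0 cv N W * (vel ns W d - vel ns V d)"
proof -
  have "(\<Sum>j<N. vel ns V j * phys_flux ns r e0 cv N d W (Mom j))
    = vel ns W d * (\<Sum>j<N. vel ns V j * W (Mom j)) + vel ns V d * pres ns r e0 cv N W"
    unfolding phys_flux_def using assms
    by (simp add: distrib_left sum.distrib sum_distrib_left if_distrib[of "\<lambda>x. _ * x"] sum.delta'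
        algebra_simps cong: if_cong)
  moreover have "dens ns (phys_flux ns r e0 cv N d W) = vel ns W d * dens ns W"
    unfolding dens_def phys_flux_def by (simp add: sum_distrib_left algebra_simps)
  moreover have "(\<Sum>i<ns. e0 i * phys_flux ns r e0 cv N d W (Rho i))
    = vel ns W d * (\<Sum>i<ns. e0 i * W (Rho i))"
    unfolding phys_flux_def by (simp add: sum_distrib_left algebra_simps)
  ultimately show ?thesis unfolding internal_energy_diff_def by (simp add: phys_flux_def algebra_simps)
qed

lemma internal_energy_diff_lincomb:
  "internal_energy_diff V (\<lambda>c. a * X c + b * Y c)
    = a * internal_energy_diff V X + b * internal_energy_diff V Y"
proof -
  obtain q where q: "\<And>W. internal_energy_diff V W
    = W En - (\<Sum>d<N. vel ns V d * W (Mom d)) + q * dens ns W - (\<Sum>i<ns. e0 i * W (Rho i))"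
    unfolding internal_energy_diff_def by blast
  have "dens ns (\<lambda>c. a * X c + b * Y c) = a * dens ns X + b * dens ns Y"
    unfolding dens_def by (simp add: sum.distrib sum_distrib_left)
  then show ?thesis unfolding q by (simp add: sum.distrib sum_subtractf sum_distrib_left algebra_simps)
qed

lemma internal_energy_diff_add:
  "internal_energy_diff V (\<lambda>c. X c + Y c) = internal_energy_diff V X + internal_energy_diff V Y"
  using internal_energy_diff_lincomb[of V 1 X 1 Y] by simp

lemma internal_energy_diff_scale:
  "internal_energy_diff V (\<lambda>c. a * X c) = a * internal_energy_diff V X"
  using internal_energy_diff_lincomb[of V a X 0 X] by simp

lemma internal_energy_diff_sum:
  assumes "finite S"
  shows "internal_energy_diff V (\<lambda>c. \<Sum>x\<in>S. F x c) = (\<Sum>x\<in>S. internal_energy_diff V (F x))"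
  using assms by (induction S rule: finite_induct)
    (simp_all add: internal_energy_diff_add internal_energy_diff_scale[of V 0, simplified])


definition lf_speed :: "(comp \<Rightarrow> real) \<Rightarrow> (comp \<Rightarrow> real) \<Rightarrow> real" where
  "lf_speed UK UL = max (vnorm ns N UK + c_mix ns r e0 cv N UK) (vnorm ns N UL + c_mix ns r e0 cv N UL)"

definition lf_speed_sum :: "nat \<Rightarrow> ((nat \<Rightarrow> nat) \<Rightarrow> comp \<Rightarrow> real) \<Rightarrow> (nat \<Rightarrow> nat) \<Rightarrow> real" where
  "lf_speed_sum M V K = (\<Sum>d<N. lf_speed (V K) (V (nbr M K d True)) + lf_speed (V K) (V (nbr M K d False)))"

lemma lf_flux_eq:
  "lf_flux ns r e0 cv N d \<sigma> UK UL c =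
     (phys_flux ns r e0 cv N d UK c + phys_flux ns r e0 cv N d UL c) / 2 * side_sign \<sigma>
     - lf_speed UK UL / 2 * (UL c - UK c)"
  unfolding lf_flux_def lf_speed_def Let_def by simp

lemma lf_speed_ge_vel:
  assumes "c_mix ns r e0 cv N UL \<ge> 0" "d < N"
  shows "\<bar>vel ns UL d\<bar> \<le> lf_speed UK UL"
  using vel_abs_le_vnorm[OF assms(2), of ns UL] assms(1) unfolding lf_speed_def by linarith

lemma fv_rhs_Rho_ge:
  assumes N: "1 \<le> N" and M: "1 \<le> M" and K: "K \<in> cells N M"
    and minimal: "\<forall>L\<in>cells N M. 0 \<le> V K (Rho i) \<and> V K (Rho i) \<le> V L (Rho i)"
    and c_mix: "\<forall>L\<in>cells N M. c_mix ns r e0 cv N (V L) \<ge> 0"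
    and vel: "\<forall>L\<in>cells N M. vnorm ns N (V L) \<le> u"
  shows "fv_rhs ns r e0 cv N M V K (Rho i) \<ge> - (real M * real N * u) * V K (Rho i)"
proof -
  have pair: "lf_flux ns r e0 cv N d True (V K) (V (nbr M K d True)) (Rho i) +
     lf_flux ns r e0 cv N d False (V K) (V (nbr M K d False)) (Rho i) \<le> u * V K (Rho i)"
    if d: "d < N" for d
  proof -
    define L1 L0 where "L1 = nbr M K d True" and "L0 = nbr M K d False"
    have L: "L1 \<in> cells N M" "L0 \<in> cells N M" unfolding L1_def L0_def using nbr_in_cells K d M by auto
    define \<rho> \<rho>1 \<rho>0 v1 v0 lam1 lam0 where "\<rho> = V K (Rho i)" and "\<rho>1 = V L1 (Rho i)" and "\<rho>0 = V L0 (Rho i)"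
      and "v1 = vel ns (V L1) d" and "v0 = vel ns (V L0) d"
      and "lam1 = lf_speed (V K) (V L1)" and "lam0 = lf_speed (V K) (V L0)"
    have "0 \<le> \<rho>" "\<rho> \<le> \<rho>1" "\<rho> \<le> \<rho>0"
      unfolding \<rho>_def \<rho>1_def \<rho>0_def using minimal L K by auto
    moreover have "\<bar>v1\<bar> \<le> lam1" "\<bar>v0\<bar> \<le> lam0"
      unfolding v1_def v0_def lam1_def lam0_def using lf_speed_ge_vel[OF _ d] c_mix L by auto
    moreover have "\<bar>v1\<bar> \<le> u" "\<bar>v0\<bar> \<le> u"
      unfolding v1_def v0_def using vel_abs_le_vnorm[OF d] vel L by (meson order_trans)+
    ultimately have "\<rho>1 * v1 - lam1 * (\<rho>1 - \<rho>) \<le> u * \<rho>" "\<rho>0 * (- v0) - lam0 * (\<rho>0 - \<rho>) \<le> u * \<rho>"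
      by (intro lf_upwind_le; simp)+
    moreover have "lf_flux ns r e0 cv N d True (V K) (V L1) (Rho i) +
       lf_flux ns r e0 cv N d False (V K) (V L0) (Rho i)
       = ((\<rho>1 * v1 - lam1 * (\<rho>1 - \<rho>)) + (\<rho>0 * (- v0) - lam0 * (\<rho>0 - \<rho>))) / 2"
      unfolding lf_flux_eq phys_flux_def side_sign_def \<rho>_def \<rho>1_def \<rho>0_def v1_def v0_def lam1_def lam0_def
      by (simp add: field_simps)
    ultimately show ?thesis unfolding L1_def L0_def \<rho>_def by simp
  qed
  have "(\<Sum>d<N. lf_flux ns r e0 cv N d True (V K) (V (nbr M K d True)) (Rho i) +
     lf_flux ns r e0 cv N d False (V K) (V (nbr M K d False)) (Rho i)) \<le> real N * (u * V K (Rho i))"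
    (is "?S \<le> _") using sum_mono[of "{..<N}", OF pair] by simp
  then have "real M * ?S \<le> real M * (real N * (u * V K (Rho i)))" by (rule mult_left_mono) simp
  then show ?thesis unfolding fv_rhs_eq_face_sum[OF N M] by (simp add: algebra_simps)
qed

lemma phys_flux_internal_energy_diff_le:
  assumes rho: "\<forall>i<ns. UL (Rho i) > 0" and ie: "internal_energy UL > 0"
    and lam: "lam \<ge> vnorm ns N UL + c_mix ns r e0 cv N UL" and d: "d < N" and s: "s = 1 \<or> s = -1"
  shows "s * internal_energy_diff UK (phys_flux ns r e0 cv N d UL) \<le> lam * internal_energy_diff UK UL"
proof -
  define R Cv where "R = (\<Sum>i<ns. UL (Rho i) * r i)" and "Cv = (\<Sum>i<ns. UL (Rho i) * cv i)"
  define v w Q where "v = vel ns UL d" and "w = vel ns UL d - vel ns UK d"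
    and "Q = (\<Sum>j<N. (vel ns UL j - vel ns UK j)\<^sup>2)"
  have R: "R > 0" and Cv: "Cv > 0" unfolding R_def Cv_def using species_sum_pos rho r_pos cv_pos by auto
  have pres: "pres ns r e0 cv N UL = R * (internal_energy UL / Cv)"
    unfolding pres_def temp_eq R_def Cv_def by simp
  have "gamma_mix ns r cv UL = (Cv + R) / Cv"
    unfolding gamma_mix_def Cv_def R_def by (simp add: distrib_left sum.distrib)
  then have c_mix: "c_mix ns r e0 cv N UL
      = sqrt (((Cv + R) / Cv) * (R * (internal_energy UL / Cv)) / dens ns UL)"
    unfolding c_mix_def pres by simp
  have "\<bar>v\<bar> \<le> vnorm ns N UL" unfolding v_def by (rule vel_abs_le_vnorm[OF d])
  then have "lam - s * v \<ge> sqrt (((Cv + R) / Cv) * (R * (internal_energy UL / Cv)) / dens ns UL)"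
    using lam c_mix s by auto
  moreover have "Q \<ge> w\<^sup>2" unfolding Q_def w_def using d by (intro member_le_sum) auto
  ultimately have "s * (R * (internal_energy UL / Cv)) * w
      \<le> (lam - s * v) * (internal_energy UL + dens ns UL * Q / 2)"
    using sound_speed_dominates_pressure_work R Cv dens_pos[OF rho] ie s by blast
  moreover have rel: "internal_energy_diff UK UL = internal_energy UL + dens ns UL * Q / 2"
    using internal_energy_diff_eq_relative dens_pos[OF rho] unfolding Q_def by simp
  have "lam * internal_energy_diff UK UL - s * internal_energy_diff UK (phys_flux ns r e0 cv N d UL)
      = (lam - s * v) * (internal_energy UL + dens ns UL * Q / 2) - s * (R * (internal_energy UL / Cv)) * w"
    unfolding internal_energy_diff_phys_flux[OF d] rel pres v_def w_def by (simp add: field_simps)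
  ultimately show ?thesis by linarith
qed

lemma internal_energy_diff_lf_flux:
  "internal_energy_diff V (lf_flux ns r e0 cv N d \<sigma> UK UL) =
     (internal_energy_diff V (phys_flux ns r e0 cv N d UK)
       + internal_energy_diff V (phys_flux ns r e0 cv N d UL)) / 2 * side_sign \<sigma>
     - lf_speed UK UL / 2 * (internal_energy_diff V UL - internal_energy_diff V UK)"
proof -
  let ?s = "side_sign \<sigma>" and ?l = "lf_speed UK UL"
  have "lf_flux ns r e0 cv N d \<sigma> UK UL = (\<lambda>c. (?s/2) * phys_flux ns r e0 cv N d UK c
      + (?s/2) * phys_flux ns r e0 cv N d UL c + ((- ?l/2) * UL c + (?l/2) * UK c))"
    by (rule ext) (simp add: lf_flux_eq field_simps)
  then show ?thesis
    by (simp only: internal_energy_diff_add internal_energy_diff_scale)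
      (simp add: algebra_simps add_divide_distrib diff_divide_distrib)
qed

lemma internal_energy_diff_fv_rhs_ge:
  assumes N: "1 \<le> N" and M: "1 \<le> M" and K: "K \<in> cells N M"
    and adm: "\<forall>L\<in>cells N M. (\<forall>i<ns. V L (Rho i) > 0) \<and> internal_energy (V L) > 0"
  shows "internal_energy_diff (V K) (fv_rhs ns r e0 cv N M V K)
    \<ge> - (real M / 2) * lf_speed_sum M V K * internal_energy (V K)"
proof -
  let ?D = "internal_energy_diff (V K)"
  have self: "?D (V K) = internal_energy (V K)"
    using internal_energy_diff_self dens_pos adm K by (simp add: less_imp_neq[symmetric])
  have pair: "?D (lf_flux ns r e0 cv N d True (V K) (V (nbr M K d True))) +
     ?D (lf_flux ns r e0 cv N d False (V K) (V (nbr M K d False)))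
     \<le> (lf_speed (V K) (V (nbr M K d True)) + lf_speed (V K) (V (nbr M K d False))) / 2
        * internal_energy (V K)" if d: "d < N" for d
  proof -
    have "nbr M K d \<sigma> \<in> cells N M" for \<sigma> using nbr_in_cells K d M by auto
    then have "s * ?D (phys_flux ns r e0 cv N d (V (nbr M K d \<sigma>)))
        \<le> lf_speed (V K) (V (nbr M K d \<sigma>)) * ?D (V (nbr M K d \<sigma>))" if "s = 1 \<or> s = -1" for s \<sigma>
      using phys_flux_internal_energy_diff_le adm d that unfolding lf_speed_def by simp
    from this[of 1 True] this[of "-1" False] show ?thesis
      unfolding internal_energy_diff_lf_flux side_sign_def self by (simp add: field_simps)
  qed
  have rhs: "?D (fv_rhs ns r e0 cv N M V K) = - real M * (\<Sum>d<N.
      ?D (lf_flux ns r e0 cv N d True (V K) (V (nbr M K d True))) +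
      ?D (lf_flux ns r e0 cv N d False (V K) (V (nbr M K d False))))"
    unfolding fv_rhs_eq_face_sum[OF N M, abs_def] internal_energy_diff_scale
    by (simp add: internal_energy_diff_sum internal_energy_diff_add)
  have "(\<Sum>d<N. ?D (lf_flux ns r e0 cv N d True (V K) (V (nbr M K d True))) +
      ?D (lf_flux ns r e0 cv N d False (V K) (V (nbr M K d False))))
    \<le> (\<Sum>d<N. (lf_speed (V K) (V (nbr M K d True)) + lf_speed (V K) (V (nbr M K d False))) / 2
        * internal_energy (V K))" (is "?S \<le> _")
    using pair by (intro sum_mono) simp
  also have "\<dots> = lf_speed_sum M V K / 2 * internal_energy (V K)"
    unfolding lf_speed_sum_def by (simp add: sum_distrib_right sum_divide_distrib)
  finally have "real M * ?S \<le> real M * (lf_speed_sum M V K / 2 * internal_energy (V K))"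
    by (rule mult_left_mono) simp
  moreover have "- (real M / 2) * lf_speed_sum M V K * internal_energy (V K)
      = - (real M * (lf_speed_sum M V K / 2 * internal_energy (V K)))" by simp
  ultimately show ?thesis unfolding rhs by linarith
qed

lemma state_continuous:
  assumes cont: "\<forall>c\<in>comps ns N. continuous (at t within S) (\<lambda>s. X s c)"
    and rho: "\<forall>i<ns. X t (Rho i) > 0"
  shows "continuous (at t within S) (\<lambda>s. vnorm ns N (X s))"
    and "continuous (at t within S) (\<lambda>s. internal_energy (X s))"
    and "continuous (at t within S) (\<lambda>s. c_mix ns r e0 cv N (X s))"
proof -
  have Rho: "continuous (at t within S) (\<lambda>s. X s (Rho i))" if "i < ns" for i
    using cont that by (auto simp: comps_def)
  have Mom: "continuous (at t within S) (\<lambda>s. X s (Mom d))" if "d < N" for d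
    using cont that by (auto simp: comps_def)
  have En: "continuous (at t within S) (\<lambda>s. X s En)" using cont by (auto simp: comps_def)
  have dens: "continuous (at t within S) (\<lambda>s. dens ns (X s))" unfolding dens_def
    by (intro continuous_intros Rho) auto
  have nz: "dens ns (X t) \<noteq> 0" "(\<Sum>i<ns. X t (Rho i) * cv i) \<noteq> 0"
    using dens_pos[OF rho] species_sum_pos[OF rho cv_pos] by auto
  show "continuous (at t within S) (\<lambda>s. vnorm ns N (X s))" unfolding vnorm_def vel_def
    by (intro continuous_intros Mom dens nz) auto
  show ie: "continuous (at t within S) (\<lambda>s. internal_energy (X s))" unfolding internal_energy_def
    by (intro continuous_intros Mom dens nz En Rho) auto
  have "continuous (at t within S) (\<lambda>s. temp ns e0 cv N (X s))" unfolding temp_eq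
    by (intro continuous_intros ie Rho nz) auto
  then show "continuous (at t within S) (\<lambda>s. c_mix ns r e0 cv N (X s))"
    unfolding c_mix_def gamma_mix_def pres_def by (intro continuous_intros Rho dens nz) auto
qed

lemma internal_energy_has_derivative:
  assumes der: "\<forall>c\<in>comps ns N. ((\<lambda>t. X t c) has_real_derivative X' c) (at \<tau> within S)"
    and dens: "dens ns (X \<tau>) \<noteq> 0"
  shows "((\<lambda>t. internal_energy (X t)) has_real_derivative internal_energy_diff (X \<tau>) X') (at \<tau> within S)"
proof -
  have En: "((\<lambda>t. X t En) has_real_derivative X' En) (at \<tau> within S)"
    using der by (simp add: comps_def)
  have Mom: "((\<lambda>t. X t (Mom d)) has_real_derivative X' (Mom d)) (at \<tau> within S)" if "d < N" for d
    using der that by (auto simp: comps_def)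
  have Rho: "((\<lambda>t. X t (Rho i)) has_real_derivative X' (Rho i)) (at \<tau> within S)" if "i < ns" for i
    using der that by (auto simp: comps_def)
  define Sq where "Sq t = (\<Sum>d<N. (X t (Mom d))\<^sup>2)" for t
  define Sq' where "Sq' = (\<Sum>d<N. 2 * (X' (Mom d) * X \<tau> (Mom d)))"
  define D where "D t = dens ns (X t)" for t
  have dSq: "(Sq has_real_derivative Sq') (at \<tau> within S)"
    unfolding Sq_def[abs_def] Sq'_def by (rule DERIV_sum) (use DERIV_power[OF Mom, of _ 2] in simp)
  have dD: "(D has_real_derivative dens ns X') (at \<tau> within S)"
    unfolding D_def[abs_def] dens_def by (rule DERIV_sum) (use Rho in simp)
  have dP: "((\<lambda>t. \<Sum>i<ns. X t (Rho i) * e0 i) has_real_derivative (\<Sum>i<ns. X' (Rho i) * e0 i))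
      (at \<tau> within S)"
    by (rule DERIV_sum) (use DERIV_mult[OF Rho DERIV_const] in simp)
  have deriv: "((\<lambda>t. X t En - ((1/2) * Sq t / D t + (\<Sum>i<ns. X t (Rho i) * e0 i))) has_real_derivative
     X' En - (((1/2) * Sq' * D \<tau> - (1/2) * Sq \<tau> * dens ns X') / (D \<tau> * D \<tau>)
       + (\<Sum>i<ns. X' (Rho i) * e0 i))) (at \<tau> within S)"
    using dens unfolding D_def
    by (intro DERIV_diff DERIV_add En dP DERIV_divide DERIV_cmult dSq dD[unfolded D_def]) auto
  have mom: "(1/2) * Sq' * D \<tau> / (D \<tau> * D \<tau>) = (\<Sum>d<N. vel ns (X \<tau>) d * X' (Mom d))"
    unfolding Sq'_def vel_def D_def using dens
    by (simp add: sum_distrib_left sum_divide_distrib sum_distrib_right field_simps)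
  have kin: "(1/2) * Sq \<tau> * dens ns X' / (D \<tau> * D \<tau>) = (\<Sum>d<N. (vel ns (X \<tau>) d)\<^sup>2) / 2 * dens ns X'"
    unfolding Sq_def vel_def D_def using dens
    by (simp add: power_divide sum_divide_distrib[symmetric] power2_eq_square)
  have "X' En - (((1/2) * Sq' * D \<tau> - (1/2) * Sq \<tau> * dens ns X') / (D \<tau> * D \<tau>)
       + (\<Sum>i<ns. X' (Rho i) * e0 i)) = internal_energy_diff (X \<tau>) X'"
    unfolding internal_energy_diff_def diff_divide_distrib mom kin by (simp add: mult.commute)
  moreover have "(\<lambda>t. X t En - ((1/2) * Sq t / D t + (\<Sum>i<ns. X t (Rho i) * e0 i)))
      = (\<lambda>t. internal_energy (X t))"
    unfolding internal_energy_def Sq_def D_def by simp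
  ultimately show ?thesis using deriv by simp
qed

end

locale fv_solution = mixture ns r e0 cv N
  for ns :: nat and r e0 cv :: "nat \<Rightarrow> real" and N :: nat +
  fixes M :: nat and T :: real and U :: "(nat \<Rightarrow> nat) \<Rightarrow> real \<Rightarrow> comp \<Rightarrow> real"
  assumes dim: "1 \<le> N" and mesh: "1 \<le> M"
    and scheme: "\<forall>K\<in>cells N M. \<forall>t\<in>{0..T}. \<forall>c\<in>comps ns N.
        ((\<lambda>\<tau>. U K \<tau> c) has_real_derivative fv_rhs ns r e0 cv N M (\<lambda>L. U L t) K c)
          (at t within {0..T})"
    and vel_L2Linf: "(\<lambda>t. (Max ((\<lambda>K. vnorm ns N (U K t)) ` cells N M))\<^sup>2) integrable_on {0..T}"
begin

lemma U_has_derivative: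
  "K \<in> cells N M \<Longrightarrow> t \<in> {0..T} \<Longrightarrow> c \<in> comps ns N \<Longrightarrow>
    ((\<lambda>\<tau>. U K \<tau> c) has_real_derivative fv_rhs ns r e0 cv N M (\<lambda>L. U L t) K c) (at t within {0..T})"
  using scheme by blast

lemma U_continuous_within:
  assumes "K \<in> cells N M" "t \<in> S" "S \<subseteq> {0..T}"
  shows "\<forall>c\<in>comps ns N. continuous (at t within S) (\<lambda>s. U K s c)"
  using DERIV_continuous[OF U_has_derivative] assms by (meson continuous_within_subset subsetD)

lemma U_continuous_on: "K \<in> cells N M \<Longrightarrow> c \<in> comps ns N \<Longrightarrow> continuous_on {0..T} (\<lambda>t. U K t c)"
  using U_continuous_within[of K _ "{0..T}"] by (simp add: continuous_on_eq_continuous_within)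

definition admissible :: "real \<Rightarrow> bool" where
  "admissible t \<longleftrightarrow> (\<forall>K\<in>cells N M. (\<forall>i<ns. U K t (Rho i) > 0) \<and> internal_energy (U K t) > 0)"

text \<open>Multiplied by the density, the internal energy is continuous without any positivity
  assumption, which makes the admissibility constraints closed.\<close>
lemma closed_not_admissible: "closed {t \<in> {0..T}. \<not> admissible t}"
proof -
  define G where "G K t = dens ns (U K t) * (U K t En - (\<Sum>i<ns. U K t (Rho i) * e0 i))
    - (1/2) * (\<Sum>d<N. (U K t (Mom d))\<^sup>2)" for K t
  have G: "G K t > 0 \<longleftrightarrow> internal_energy (U K t) > 0" if "\<forall>i<ns. U K t (Rho i) > 0" for K t
  proof -
    have "G K t = dens ns (U K t) * internal_energy (U K t)"
      using dens_mult_internal_energy[of "U K t"] dens_pos[OF that] unfolding G_def by simp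
    then show ?thesis using dens_pos[OF that] by (simp add: zero_less_mult_iff)
  qed
  have "\<not> admissible t \<longleftrightarrow> (\<exists>K\<in>cells N M. (\<exists>i<ns. U K t (Rho i) \<le> 0) \<or> G K t \<le> 0)" for t
    unfolding admissible_def using G by (meson not_less)
  then have "{t \<in> {0..T}. \<not> admissible t}
      = {t \<in> {0..T}. \<exists>K\<in>cells N M. (\<exists>i<ns. U K t (Rho i) \<le> 0) \<or> G K t \<le> 0}" by simp
  also have "\<dots> = (\<Union>K\<in>cells N M.
      (\<Union>i<ns. {0..T} \<inter> (\<lambda>t. U K t (Rho i)) -` {..0}) \<union> ({0..T} \<inter> G K -` {..0}))"
    by auto blast
  also have "closed \<dots>"
  proof (intro closed_UN closed_Un ballI finite_cells finite_lessThan)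
    fix K i assume "K \<in> cells N M" "i \<in> {..<ns}"
    then show "closed ({0..T} \<inter> (\<lambda>t. U K t (Rho i)) -` {..0})"
      by (intro continuous_closed_preimage U_continuous_on Rho_in_comps) auto
  next
    fix K assume "K \<in> cells N M"
    then have "continuous_on {0..T} (G K)" unfolding G_def[abs_def] dens_def
      using U_continuous_on by (intro continuous_intros) (auto simp: comps_def)
    then show "closed ({0..T} \<inter> G K -` {..0})" by (intro continuous_closed_preimage) auto
  qed
  finally show ?thesis .
qed

definition vel_max :: "real \<Rightarrow> real" where
  "vel_max t = Max ((\<lambda>K. vnorm ns N (U K t)) ` cells N M)"

text \<open>The square keeps the rate integrable under the L2(L-infinity) velocity bound while
  still dominating M N vel_max.\<close>
definition density_rate :: "real \<Rightarrow> real" where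
  "density_rate t = real M * real N * (1 + (vel_max t)\<^sup>2)"

lemma vnorm_le_vel_max: "K \<in> cells N M \<Longrightarrow> vnorm ns N (U K t) \<le> vel_max t"
  unfolding vel_max_def using finite_cells by (intro Max_ge) auto

lemma density_rate_integrable: "density_rate integrable_on {0..T}"
proof -
  have "(\<lambda>t. real M * real N * 1 + real M * real N * (vel_max t)\<^sup>2) integrable_on {0..T}"
    using vel_L2Linf unfolding vel_max_def[symmetric]
    by (intro integrable_add integrable_const_ivl)
      (rule integrable_on_cmult_left[where c = "real M * real N", simplified])
  then show ?thesis unfolding density_rate_def[abs_def] by (simp add: distrib_left)
qed

lemma integral_density_rate_has_derivative:
  assumes "\<tau> \<in> {0..T}" "admissible \<tau>"
  shows "((\<lambda>t. integral {0..t} density_rate) has_real_derivative density_rate \<tau>) (at \<tau> within {0..T})"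
proof -
  have "\<forall>K\<in>cells N M. continuous (at \<tau> within {0..T}) (\<lambda>s. vnorm ns N (U K s))"
    using assms state_continuous(1)[OF U_continuous_within] unfolding admissible_def by blast
  then have "continuous (at \<tau> within {0..T}) vel_max"
    unfolding vel_max_def[abs_def] using finite_cells cells_nonempty[OF mesh]
    by (intro continuous_Max_image) auto
  then have "continuous (at \<tau> within {0..T}) density_rate"
    unfolding density_rate_def[abs_def] by (intro continuous_intros)
  then show ?thesis
    using integral_has_vector_derivative_continuous_at[OF density_rate_integrable, of \<tau> "{}"] assms(1)
    unfolding has_real_derivative_iff_has_vector_derivative by simp
qed

lemma density_growth_pos:
  assumes adm: "admissible \<tau>" and K: "K \<in> cells N M" and i: "i < ns"
    and minimal: "\<forall>L\<in>cells N M. U K \<tau> (Rho i) \<le> U L \<tau> (Rho i)"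
  shows "fv_rhs ns r e0 cv N M (\<lambda>L. U L \<tau>) K (Rho i) + (density_rate \<tau> + 1) * U K \<tau> (Rho i) > 0"
proof -
  have pos: "U K \<tau> (Rho i) > 0" using adm K i unfolding admissible_def by auto
  have "fv_rhs ns r e0 cv N M (\<lambda>L. U L \<tau>) K (Rho i) \<ge> - (real M * real N * vel_max \<tau>) * U K \<tau> (Rho i)"
    using adm minimal pos by (intro fv_rhs_Rho_ge dim mesh K)
      (auto simp: admissible_def intro: c_mix_nonneg vnorm_le_vel_max)
  then have rhs: "fv_rhs ns r e0 cv N M (\<lambda>L. U L \<tau>) K (Rho i) \<ge> - (real M * real N * vel_max \<tau> * U K \<tau> (Rho i))"
    by simp
  have "vel_max \<tau> \<le> 1 + (vel_max \<tau>)\<^sup>2"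
    by (simp add: power2_eq_square) (smt (verit) mult_nonneg_nonneg mult_le_cancel_left1)
  then have "real M * real N * vel_max \<tau> \<le> density_rate \<tau>"
    unfolding density_rate_def by (intro mult_left_mono) auto
  then have "real M * real N * vel_max \<tau> * U K \<tau> (Rho i) \<le> density_rate \<tau> * U K \<tau> (Rho i)"
    using pos by (intro mult_right_mono) auto
  with rhs pos have "fv_rhs ns r e0 cv N M (\<lambda>L. U L \<tau>) K (Rho i) + density_rate \<tau> * U K \<tau> (Rho i)
      + U K \<tau> (Rho i) > 0" by linarith
  then show ?thesis by (simp add: distrib_right add.assoc)
qed

lemma density_lower_bound:
  assumes l: "l > 0" "\<forall>K\<in>cells N M. \<forall>i<ns. U K 0 (Rho i) > l"
    and t0: "t0 \<in> {0..T}" and adm: "\<forall>t\<in>{0..t0}. admissible t"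
    and K: "K \<in> cells N M" and i: "i < ns"
  shows "U K t0 (Rho i) > l * exp (- (integral {0..T} density_rate + T))"
proof -
  define A where "A t = integral {0..t} density_rate" for t
  define h where "h k t = U (fst k) t (Rho (snd k)) * exp (A t + t)" for k t
  have sub: "{0..t0} \<subseteq> {0..T}" using t0 by auto
  have "\<forall>k\<in>cells N M \<times> {..<ns}. \<forall>t\<in>{0..t0}. h k t > l"
  proof (rule barrier_lower_bound)
    show "finite (cells N M \<times> {..<ns})" using finite_cells by simp
    have "continuous_on {0..T} A"
      unfolding A_def[abs_def] by (rule indefinite_integral_continuous_1[OF density_rate_integrable])
    then show "\<forall>k\<in>cells N M \<times> {..<ns}. continuous_on {0..t0} (h k)"
      unfolding h_def[abs_def] using sub
      by (auto intro!: continuous_intros U_continuous_on Rho_in_comps intro: continuous_on_subset)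
    show "\<forall>k\<in>cells N M \<times> {..<ns}. h k 0 > l" using l unfolding h_def A_def by auto
  next
    fix \<tau> k assume \<tau>: "\<tau> \<in> {0<..t0}" and k: "k \<in> cells N M \<times> {..<ns}" and touch: "h k \<tau> = l"
      and above: "\<forall>j\<in>cells N M \<times> {..<ns}. \<forall>s\<in>{0..\<tau>}. h j s \<ge> l"
    obtain K' i' where k': "k = (K', i')" "K' \<in> cells N M" "i' < ns" using k by auto
    have \<tau>T: "\<tau> \<in> {0..T}" and adm\<tau>: "admissible \<tau>" using \<tau> t0 adm by auto
    have "\<forall>L\<in>cells N M. U K' \<tau> (Rho i') \<le> U L \<tau> (Rho i')"
    proof
      fix L assume "L \<in> cells N M"
      then have "h (K', i') \<tau> \<le> h (L, i') \<tau>" using above touch k' \<tau> by auto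
      then show "U K' \<tau> (Rho i') \<le> U L \<tau> (Rho i')" unfolding h_def by simp
    qed
    then have growth: "fv_rhs ns r e0 cv N M (\<lambda>L. U L \<tau>) K' (Rho i')
        + (density_rate \<tau> + 1) * U K' \<tau> (Rho i') > 0"
      using density_growth_pos adm\<tau> k' by blast
    have weight: "((\<lambda>t. A t + t) has_real_derivative density_rate \<tau> + 1) (at \<tau> within {0..T})"
      unfolding A_def using integral_density_rate_has_derivative[OF \<tau>T adm\<tau>]
      by (auto intro!: derivative_eq_intros)
    have "\<exists>D>0. (h k has_real_derivative D) (at \<tau> within {0..T})"
      unfolding h_def k'(1) fst_conv snd_conv
      by (rule exp_weighted_has_derivative_pos[OF U_has_derivative[OF k'(2) \<tau>T Rho_in_comps[OF k'(3)]]
          weight growth])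
    then show "\<exists>D>0. (h k has_real_derivative D) (at \<tau> within {0..t0})"
      using sub by (meson DERIV_subset)
  qed
  then have "l * exp (- (A t0 + t0)) < U K t0 (Rho i)"
    using K i t0 unfolding h_def less_mult_exp_iff by auto
  moreover have "A t0 \<le> integral {0..T} density_rate"
    unfolding A_def using t0 density_rate_integrable
    by (intro integral_subset_le) (auto intro: integrable_on_subinterval simp: density_rate_def)
  then have "l * exp (- (integral {0..T} density_rate + T)) \<le> l * exp (- (A t0 + t0))"
    using t0 l by simp
  ultimately show ?thesis by linarith
qed
lemma lf_speed_sum_bounded:
  assumes t0: "t0 \<in> {0..T}" and rho: "\<forall>t\<in>{0..t0}. \<forall>K\<in>cells N M. \<forall>i<ns. U K t (Rho i) > 0"
  shows "\<exists>B. \<forall>t\<in>{0..t0}. \<forall>K\<in>cells N M. lf_speed_sum M (\<lambda>L. U L t) K \<le> B"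
proof -
  define \<Phi> where "\<Phi> t = (\<Sum>K\<in>cells N M. \<bar>lf_speed_sum M (\<lambda>L. U L t) K\<bar>)" for t
  have "continuous (at t within {0..t0}) \<Phi>" if t: "t \<in> {0..t0}" for t
  proof -
    have "continuous (at t within {0..t0}) (\<lambda>s. vnorm ns N (U L s))"
      "continuous (at t within {0..t0}) (\<lambda>s. c_mix ns r e0 cv N (U L s))" if "L \<in> cells N M" for L
      using state_continuous(1,3)[OF U_continuous_within[OF that t]] t0 rho t that by auto
    then show ?thesis unfolding \<Phi>_def lf_speed_sum_def lf_speed_def
      using nbr_in_cells[OF _ _ mesh] by (intro continuous_intros) auto
  qed
  then obtain tm where "\<forall>t\<in>{0..t0}. \<Phi> t \<le> \<Phi> tm"
    using continuous_attains_sup[OF compact_Icc _ continuous_on_eq_continuous_within[THEN iffD2]] t0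
    by (metis atLeastAtMost_iff atLeastatMost_empty_iff2 empty_iff)
  moreover have "lf_speed_sum M (\<lambda>L. U L t) K \<le> \<Phi> t" if "K \<in> cells N M" for t K
  proof -
    have "\<bar>lf_speed_sum M (\<lambda>L. U L t) K\<bar> \<le> \<Phi> t"
      unfolding \<Phi>_def using finite_cells that by (intro member_le_sum) auto
    then show ?thesis by linarith
  qed
  ultimately show ?thesis by (meson order_trans)
qed

lemma internal_energy_growth_pos:
  assumes adm: "admissible \<tau>" and K: "K \<in> cells N M" and B: "lf_speed_sum M (\<lambda>L. U L \<tau>) K \<le> B"
  shows "internal_energy_diff (U K \<tau>) (fv_rhs ns r e0 cv N M (\<lambda>L. U L \<tau>) K)
    + (real M / 2 * B + 1) * internal_energy (U K \<tau>) > 0"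
proof -
  have ie: "internal_energy (U K \<tau>) > 0" using adm K unfolding admissible_def by auto
  have "internal_energy_diff (U K \<tau>) (fv_rhs ns r e0 cv N M (\<lambda>L. U L \<tau>) K)
      \<ge> - (real M / 2) * lf_speed_sum M (\<lambda>L. U L \<tau>) K * internal_energy (U K \<tau>)"
    using adm unfolding admissible_def by (intro internal_energy_diff_fv_rhs_ge dim mesh K) auto
  moreover have "real M / 2 * lf_speed_sum M (\<lambda>L. U L \<tau>) K * internal_energy (U K \<tau>)
      \<le> real M / 2 * B * internal_energy (U K \<tau>)"
    using B ie by (intro mult_right_mono mult_left_mono) auto
  ultimately show ?thesis using ie by (simp add: algebra_simps)
qed

lemma internal_energy_positive:
  assumes t0: "t0 \<in> {0..T}" and rho: "\<forall>t\<in>{0..t0}. \<forall>K\<in>cells N M. \<forall>i<ns. U K t (Rho i) > 0"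
    and init: "\<forall>K\<in>cells N M. internal_energy (U K 0) > 0"
  shows "\<forall>K\<in>cells N M. \<forall>t\<in>{0..t0}. internal_energy (U K t) > 0"
proof -
  have sub: "{0..t0} \<subseteq> {0..T}" using t0 by auto
  obtain B where B: "\<forall>t\<in>{0..t0}. \<forall>K\<in>cells N M. lf_speed_sum M (\<lambda>L. U L t) K \<le> B"
    using lf_speed_sum_bounded[OF t0 rho] by blast
  obtain l where l: "l > 0" "\<forall>K\<in>cells N M. internal_energy (U K 0) > l"
    using finite_pos_lower_bound[OF finite_cells init] by blast
  define \<beta> where "\<beta> = real M / 2 * B + 1"
  define h where "h K t = internal_energy (U K t) * exp (\<beta> * t)" for K t
  have "\<forall>K\<in>cells N M. \<forall>t\<in>{0..t0}. h K t > l"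
  proof (rule barrier_lower_bound[OF finite_cells])
    show "\<forall>K\<in>cells N M. continuous_on {0..t0} (h K)"
      unfolding h_def[abs_def] continuous_on_eq_continuous_within
      using state_continuous(2)[OF U_continuous_within] rho sub
      by (auto intro!: continuous_intros)
    show "\<forall>K\<in>cells N M. h K 0 > l" using l unfolding h_def by simp
  next
    fix \<tau> K assume \<tau>: "\<tau> \<in> {0<..t0}" and K: "K \<in> cells N M"
      and above: "\<forall>L\<in>cells N M. \<forall>s\<in>{0..\<tau>}. h L s \<ge> l"
    have \<tau>T: "\<tau> \<in> {0..T}" and rho\<tau>: "\<forall>L\<in>cells N M. \<forall>i<ns. U L \<tau> (Rho i) > 0"
      using \<tau> t0 rho by auto
    have ie: "internal_energy (U L \<tau>) > 0" if "L \<in> cells N M" for L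
      using above that \<tau> unfolding h_def
      by (intro pos_if_exp_weighted_ge[OF l(1), of _ "\<beta> * \<tau>"]) auto
    have growth: "internal_energy_diff (U K \<tau>) (fv_rhs ns r e0 cv N M (\<lambda>L. U L \<tau>) K)
        + \<beta> * internal_energy (U K \<tau>) > 0"
      unfolding \<beta>_def using ie rho\<tau> B \<tau> K
      by (intro internal_energy_growth_pos) (auto simp: admissible_def)
    have "((\<lambda>t. internal_energy (U K t)) has_real_derivative
        internal_energy_diff (U K \<tau>) (fv_rhs ns r e0 cv N M (\<lambda>L. U L \<tau>) K)) (at \<tau> within {0..T})"
      using U_has_derivative[OF K \<tau>T] dens_pos[of "U K \<tau>"] rho\<tau> K
      by (intro internal_energy_has_derivative) auto
    moreover have "((\<lambda>t. \<beta> * t) has_real_derivative \<beta>) (at \<tau> within {0..T})"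
      by (auto intro!: derivative_eq_intros)
    ultimately have "\<exists>D>0. (h K has_real_derivative D) (at \<tau> within {0..T})"
      unfolding h_def using growth by (intro exp_weighted_has_derivative_pos)
    then show "\<exists>D>0. (h K has_real_derivative D) (at \<tau> within {0..t0})"
      using sub by (meson DERIV_subset)
  qed
  then show ?thesis using l(1) unfolding h_def by (auto intro: pos_if_exp_weighted_ge less_imp_le)
qed

lemma admissible_everywhere:
  assumes "admissible 0"
  shows "\<forall>t\<in>{0..T}. admissible t"
proof (rule continuous_induction[OF closed_not_admissible assms])
  fix t0 assume t0: "t0 \<in> {0<..T}" and before: "\<forall>t\<in>{0..<t0}. admissible t"
  obtain l where l: "l > 0" "\<forall>k\<in>cells N M \<times> {..<ns}. U (fst k) 0 (Rho (snd k)) > l"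
    using finite_pos_lower_bound[of "cells N M \<times> {..<ns}" "\<lambda>k. U (fst k) 0 (Rho (snd k))"]
      finite_cells assms unfolding admissible_def by auto
  define floor where "floor = l * exp (- (integral {0..T} density_rate + T))"
  have floor_pos: "floor > 0" unfolding floor_def using l by simp
  have below: "U K t (Rho i) > floor" if "t \<in> {0..<t0}" "K \<in> cells N M" "i < ns" for K t i
    unfolding floor_def using l that t0 before by (intro density_lower_bound) auto
  have "U K t (Rho i) > 0" if t: "t \<in> {0..t0}" and K: "K \<in> cells N M" and i: "i < ns" for K t i
  proof (cases "t < t0")
    case True
    with below[OF _ K i, of t] t floor_pos show ?thesis by auto
  next
    case False
    have "floor \<le> U K t0 (Rho i)"
      using t0 below[OF _ K i] U_continuous_on[OF K Rho_in_comps[OF i]]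
      by (intro continuous_on_ge_right_endpoint[of 0 t0]) (auto intro: less_imp_le continuous_on_subset)
    with False t floor_pos show ?thesis by auto
  qed
  then have rho: "\<forall>t\<in>{0..t0}. \<forall>K\<in>cells N M. \<forall>i<ns. U K t (Rho i) > 0" by blast
  have "\<forall>K\<in>cells N M. internal_energy (U K t0) > 0"
    using internal_energy_positive[OF _ rho] t0 assms unfolding admissible_def by auto
  with rho t0 show "admissible t0" unfolding admissible_def by auto
qed

end

theorem lemma3p2:
  fixes N M ns :: nat and r e0 cv :: "nat \<Rightarrow> real" and T Z :: real
    and U :: "(nat \<Rightarrow> nat) \<Rightarrow> real \<Rightarrow> comp \<Rightarrow> real"
  assumes dim: "1 \<le> N" "N \<le> 3"
    and mesh: "1 \<le> M"
    and species: "1 \<le> ns"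
    and r_pos: "\<forall>i<ns. r i > 0"
    and cv_pos: "\<forall>i<ns. cv i > 0"
    and scheme: "\<forall>K\<in>cells N M. \<forall>t\<in>{0..T}. \<forall>c\<in>comps ns N.
        ((\<lambda>\<tau>. U K \<tau> c) has_real_derivative fv_rhs ns r e0 cv N M (\<lambda>L. U L t) K c)
          (at t within {0..T})"
    and rho0: "\<forall>K\<in>cells N M. \<forall>i<ns. U K 0 (Rho i) > 0"
    and vel_L2Linf: "(\<lambda>t. (Max ((\<lambda>K. vnorm ns N (U K t)) ` cells N M))\<^sup>2) integrable_on {0..T}"
    and s0: "\<forall>K\<in>cells N M. temp ns e0 cv N (U K 0) > 0 \<and> spec_entropy ns r e0 cv N (U K 0) \<ge> Z"
  shows "\<forall>K\<in>cells N M. \<forall>t\<in>{0..T}.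
           temp ns e0 cv N (U K t) > 0 \<and> pres ns r e0 cv N (U K t) > 0"
proof -
  interpret fv_solution ns r e0 cv N M T U
    using dim(1) mesh species r_pos cv_pos scheme vel_L2Linf by unfold_locales
  have "admissible 0" using rho0 s0 temp_pos_iff unfolding admissible_def by blast
  then have "\<forall>t\<in>{0..T}. admissible t" by (rule admissible_everywhere)
  then show ?thesis using temp_pos_iff pres_pos unfolding admissible_def by blast
qed

end
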